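(* Let $t$ be an integer with $m=2t+1\geq 11$, $n=2^m+1$ and $\delta_2=\frac{n-3}{6}$. If $x$ is an odd integer with $\delta_2+2\leq x\leq \delta_2+2^{2t-4}$, then $x$ is not a coset leader modulo $n$.
   Context: For $n=2^m+1$ and an integer $x$, the 2-cyclotomic coset of $x$ modulo $n$ is $C_x=\{x\cdot 2^{j} \bmod n : j\geq 0\}\subseteq\{0,1,\dots,n-1\}$. For $0\leq x\leq n-1$, "$x$ is a coset leader" means that $x$ is the smallest element of $C_x$. *)

theory Defs
  imports Main
begin

definition cyc_coset :: "nat \<Rightarrow> nat \<Rightarrow> nat set" where
  "cyc_coset n x = {x * 2 ^ j mod n | j. True}"

definition coset_leader :: "nat \<Rightarrow> nat \<Rightarrow> bool" where
  "coset_leader n x \<longleftrightarrow> x \<le> n - 1 \<and> (\<forall>y \<in> cyc_coset n x. x \<le> y)"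

end

theory Submission
  imports Defs
begin

text \<open>Write \<open>n = 3N\<close> and \<open>2x = N + w\<close> with \<open>0 < w < N\<close>. Since \<open>4^l \<equiv> 1 (mod 3)\<close>, multiplying
  \<open>2x\<close> by \<open>4^l\<close> fixes \<open>N\<close> modulo \<open>n\<close> and moves \<open>w\<close> to \<open>T = 4^l w mod n\<close>. Multiplying by 4 modulo
  \<open>3N\<close> can only leave the range \<open>[0, N)\<close> by passing through the window \<open>N/4 \<le> T < 3N/4\<close>, and it
  must leave it because \<open>4^(t+1) w = 2w \<cdot> 2^m \<equiv> -2w\<close>. Once \<open>T\<close> is in the window, either
  \<open>2N + 2T - n\<close> or \<open>n - (2N + 2T)\<close> lies in the coset of \<open>x\<close> (as \<open>2^m \<equiv> -1\<close>) and is below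
  \<open>N/2 < x\<close>.\<close>

lemma mod_mult_pred:
  fixes a n :: nat
  assumes "0 < a mod n"
  shows "a * (n - 1) mod n = n - a mod n"
proof (cases "n = 0")
  case False
  then have n: "0 < n" by simp
  have "int (a * (n - 1)) mod int n = (- int a) mod int n"
  proof -
    have "int (a * (n - 1)) = - int a + int n * int a"
      using n by (simp add: of_nat_diff algebra_simps)
    then show ?thesis by (metis mod_mult_self2)
  qed
  also have "\<dots> = int (n - a mod n)"
    using assms n by (simp add: zmod_zminus1_eq_if of_nat_diff flip: of_nat_mod)
  finally show ?thesis
    by (metis nat_int of_nat_mod)
qed simp

lemma pow4_mod3: "(4::nat) ^ l mod 3 = 1"
  by (induction l) (auto simp: mod_mult_right_eq[symmetric])

lemma mult_pow2_mod_in_cyc_coset: "x * 2 ^ j mod n \<in> cyc_coset n x"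
  by (auto simp: cyc_coset_def)

lemma not_coset_leader_if_smaller:
  assumes "y \<in> cyc_coset n x" and "y < x"
  shows "\<not> coset_leader n x"
  using assms unfolding coset_leader_def by (meson leD)

lemma cyc_coset_complement:
  assumes n: "n = 2 ^ m + 1" and y: "y \<in> cyc_coset n x" and "0 < y"
  shows "n - y \<in> cyc_coset n x"
proof -
  obtain j where j: "y = x * 2 ^ j mod n"
    using y unfolding cyc_coset_def by auto
  have "x * 2 ^ (j + m) = x * 2 ^ j * (n - 1)"
    using n by (simp add: power_add)
  then have "x * 2 ^ (j + m) mod n = x * 2 ^ j * (n - 1) mod n"
    by (rule arg_cong)
  also have "\<dots> = n - y"
    using mod_mult_pred[of "x * 2 ^ j" n] j \<open>0 < y\<close> by simp
  finally have "x * 2 ^ (j + m) mod n = n - y" .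
  then show ?thesis
    using mult_pow2_mod_in_cyc_coset by metis
qed

lemma mult4_mod_stays_below:
  fixes N n w L :: nat
  assumes n: "n = 3 * N" and "w < N"
    and avoid: "\<forall>l<L. \<not> (N \<le> 4 * (4 ^ l * w mod n) \<and> 4 * (4 ^ l * w mod n) < 3 * N)"
  shows "4 ^ L * w mod n < N"
  using avoid
proof (induction L)
  case 0
  then show ?case using assms(1,2) by simp
next
  case (Suc L)
  define T where "T = 4 ^ L * w mod n"
  have T: "T < N" and not_window: "\<not> (N \<le> 4 * T \<and> 4 * T < 3 * N)"
    using Suc unfolding T_def by auto
  have "4 ^ Suc L * w mod n = 4 * T mod n"
    unfolding T_def by (metis mod_mult_right_eq mult.assoc power_Suc)
  also have "\<dots> < N"
  proof (cases "4 * T < N")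
    case False
    then have "3 * N \<le> 4 * T" using not_window by auto
    then have "4 * T mod n = 4 * T - n"
      using n T by (simp add: le_mod_geq)
    then show ?thesis using n T by simp
  qed (use n in simp)
  finally show ?case .
qed

lemma mult4_mod_hits_window:
  fixes N n w L :: nat
  assumes "n = 3 * N" and "w < N" and "N \<le> 4 ^ L * w mod n"
  shows "\<exists>l<L. N \<le> 4 * (4 ^ l * w mod n) \<and> 4 * (4 ^ l * w mod n) < 3 * N"
  using mult4_mod_stays_below[OF assms(1,2)] assms(3) by (meson not_le)

lemma smaller_coset_element_from_window:
  fixes n m N x w l :: nat
  assumes n: "n = 2 ^ m + 1" "n = 3 * N" and x: "2 * x = N + w" "0 < w"
    and window: "N \<le> 4 * (4 ^ l * w mod n)" "4 * (4 ^ l * w mod n) < 3 * N"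
  shows "\<exists>y \<in> cyc_coset n x. y < x"
proof -
  define T where "T = 4 ^ l * w mod n"
  define M where "M = 4 ^ l * w div n"
  obtain q where q: "(4::nat) ^ l = 3 * q + 1"
    using pow4_mod3[of l] by (metis mod_mult_div_eq add.commute)
  have "x * 2 ^ (2 * l + 2) = 2 * (2 * x) * 4 ^ l"
    by (simp add: power_add power_mult)
  also have "\<dots> = 2 * N * 4 ^ l + 2 * (4 ^ l * w)"
    unfolding x(1) by (simp add: algebra_simps)
  also have "\<dots> = (2 * N + 2 * T) + n * (2 * q + 2 * M)"
  proof -
    have "4 ^ l * w = T + n * M"
      unfolding T_def M_def by simp
    moreover have "2 * N * 4 ^ l = 2 * N + n * (2 * q)"
      unfolding q n(2) by (simp add: algebra_simps)
    ultimately show ?thesis by (simp add: algebra_simps)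
  qed
  finally have "x * 2 ^ (2 * l + 2) mod n = (2 * N + 2 * T) mod n"
    by simp
  then have mem: "(2 * N + 2 * T) mod n \<in> cyc_coset n x"
    using mult_pow2_mod_in_cyc_coset by metis
  show ?thesis
  proof (cases "n \<le> 2 * N + 2 * T")
    case True
    then have "(2 * N + 2 * T) mod n = 2 * N + 2 * T - n"
      using window n(2) T_def by (simp add: le_mod_geq)
    moreover have "2 * N + 2 * T - n < x"
      using True window x n(2) unfolding T_def[symmetric] by simp
    ultimately show ?thesis
      using mem by auto
  next
    case False
    then have "n - (2 * N + 2 * T) \<in> cyc_coset n x"
      using cyc_coset_complement[OF n(1) mem] window n(2) unfolding T_def[symmetric] by simp
    moreover have "n - (2 * N + 2 * T) < x"
      using False window x n(2) unfolding T_def[symmetric] by simp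
    ultimately show ?thesis by blast
  qed
qed

theorem lemma3p3:
  fixes t m n \<delta>2 x :: nat
  assumes "m = 2 * t + 1" and "m \<ge> 11"
    and "n = 2 ^ m + 1"
    and "\<delta>2 = (n - 3) div 6"
    and "odd x"
    and "\<delta>2 + 2 \<le> x" and "x \<le> \<delta>2 + 2 ^ (2 * t - 4)"
  shows "\<not> coset_leader n x"
proof -
  define P :: nat where "P = 2 ^ (2 * t - 4)"
  have "2 * t = (2 * t - 4) + 4" using assms(1,2) by simp
  then have "(2::nat) ^ (2 * t) = 2 ^ (2 * t - 4) * 2 ^ 4"
    by (metis power_add)
  then have four_t: "(4::nat) ^ t = 16 * P"
    unfolding P_def by (simp add: power_mult)
  have two_m: "(2::nat) ^ m = 32 * P"
    using assms(1) four_t by (simp add: power_mult power_add)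
  obtain D where D: "16 * P = 3 * D + 1"
    using pow4_mod3[of t] four_t by (metis mod_mult_div_eq add.commute)
  define N where "N = 2 * D + 1"
  define w where "w = 2 * x - N"
  have nN: "n = 3 * N" and \<delta>2: "\<delta>2 = D"
    using assms(3,4) two_m D N_def by simp_all
  have xw: "2 * x = N + w" and "0 < w" and "w < N"
    using assms(6,7) \<delta>2 D unfolding N_def w_def P_def[symmetric] by auto
  have "4 ^ (t + 1) * w = 2 * w * (n - 1)"
    using four_t two_m assms(3) by simp
  then have "4 ^ (t + 1) * w mod n = 2 * w * (n - 1) mod n"
    by (rule arg_cong)
  also have "\<dots> = n - 2 * w"
    using mod_mult_pred[of "2 * w" n] nN \<open>0 < w\<close> \<open>w < N\<close> by simp
  finally have "N \<le> 4 ^ (t + 1) * w mod n"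
    using nN \<open>w < N\<close> by simp
  then obtain l where "N \<le> 4 * (4 ^ l * w mod n)" "4 * (4 ^ l * w mod n) < 3 * N"
    using mult4_mod_hits_window[OF nN \<open>w < N\<close>] by blast
  then show ?thesis
    using smaller_coset_element_from_window[OF assms(3) nN xw \<open>0 < w\<close>] not_coset_leader_if_smaller
    by blast
qed

end
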